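(* Let $f$ be meromorphic on $\mathbb{C}$, not identically zero, and suppose there is $\omega\in\mathbb{C}\setminus\{0\}$ such that for every $t\in\mathbb{R}$ the phase of $f$ is invariant under translation by $t\omega$, i.e. $f(z+t\omega)/|f(z+t\omega)|=f(z)/|f(z)|$ whenever both sides are defined. Then there exist $a,b\in\mathbb{C}$ with $f(z)=\mathrm{e}^{az+b}$ for all $z\in\mathbb{C}$.
   Context: The phase $f(z)/|f(z)|$ is defined at points where $f(z)\in\mathbb{C}\setminus\{0\}$. *)

theory Defs
  imports "HOL-Analysis.Analysis"
begin

text \<open>A meromorphic function on the whole complex plane, with pole set P:
  P has no accumulation point in the plane, f is holomorphic off P,
  and f tends to infinity at every point of P (the values of f on P are irrelevant).\<close>
definition meromorphic_on_C :: "(complex \<Rightarrow> complex) \<Rightarrow> complex set \<Rightarrow> bool" where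
  "meromorphic_on_C f P \<longleftrightarrow>
     (\<forall>z. \<not> z islimpt P) \<and> f holomorphic_on (- P) \<and>
     (\<forall>p\<in>P. filterlim f at_infinity (at p))"

end

theory Submission
  imports Defs "HOL-Complex_Analysis.Conformal_Mappings"
begin

(* Idea: where f is holomorphic and non-zero, differentiating the invariance
   f(z + t \<omega>) * cnj (f z) \<in> \<real> at t = 0 shows that \<omega> * f'(z)/f(z) is real.  A real-valued
   holomorphic function on a ball is constant (open mapping theorem), so near a point z1
   with f z1 \<noteq> 0 the function f solves f' = a f and hence equals f z1 * exp (a (z - z1)).
   The identity theorem extends this equality to the whole complement of the pole set,
   which is connected since the pole set is countable; finally the exponential has a
   finite limit at every point, so there cannot be any poles at all. *)

lemma sgn_eq_imp_mult_cnj_real: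
  fixes a b :: complex
  assumes "sgn a = sgn b"
  shows "a * cnj b \<in> \<real>"
proof -
  have polar: "z = of_real (cmod z) * sgn z" for z :: complex
    by (cases "z = 0") (simp_all add: sgn_div_norm scaleR_conv_of_real)
  have "a * cnj b = (of_real (cmod a) * sgn b) * cnj (of_real (cmod b) * sgn b)"
    using polar[of a] polar[of b] assms by simp
  also have "\<dots> = of_real (cmod a * cmod b) * (sgn b * cnj (sgn b))"
    by (simp add: algebra_simps)
  finally have prod: "a * cnj b = of_real (cmod a * cmod b) * (sgn b * cnj (sgn b))" .
  have "sgn b * cnj (sgn b) \<in> \<real>" by (simp add: complex_mult_cnj)
  then show ?thesis by (simp add: prod)
qed

lemma has_vector_derivative_real_valued:
  fixes \<phi> :: "real \<Rightarrow> complex"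
  assumes "(\<phi> has_vector_derivative A) (at x)" "eventually (\<lambda>t. \<phi> t \<in> \<real>) (nhds x)"
  shows "A \<in> \<real>"
proof -
  have cnj_eq: "eventually (\<lambda>t. cnj (\<phi> t) = \<phi> t) (nhds x)"
    using assms(2) by (auto elim: eventually_mono simp: Reals_cnj_iff)
  have "((\<lambda>t. cnj (\<phi> t)) has_vector_derivative cnj A) (at x)"
    using has_vector_derivative_cnj[OF assms(1)] .
  then have "(\<phi> has_vector_derivative cnj A) (at x)"
    using has_vector_derivative_cong_ev[where f="\<lambda>t. cnj (\<phi> t)" and g=\<phi> and S=UNIV] cnj_eq
      eventually_nhds_x_imp_x[OF cnj_eq] by (simp add: eventually_mono)
  then have "cnj A = A" using assms(1) vector_derivative_unique_at by blast
  then show ?thesis by (simp add: Reals_cnj_iff)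
qed

lemma has_vector_derivative_along_line:
  assumes "(f has_field_derivative D) (at (z + of_real x * v))"
  shows "((\<lambda>t. f (z + of_real t * v)) has_vector_derivative v * D) (at x)"
proof -
  have "((\<lambda>s. z + s * v) has_field_derivative v) (at (of_real x))"
    by (auto intro!: derivative_eq_intros)
  from DERIV_chain'[OF this assms] have "((\<lambda>s. f (z + s * v)) has_field_derivative D * v) (at (of_real x))" .
  from has_vector_derivative_real_field[OF this] show ?thesis by (simp add: mult.commute)
qed

(* Infinitesimal form of phase invariance along \<omega>: the logarithmic derivative of f,
   multiplied by \<omega>, is real.  (If f z = 0 the quotient is 0 and the claim is trivial.) *)
lemma phase_invariance_imp_logderiv_real:
  fixes f :: "complex \<Rightarrow> complex"
  assumes "(f has_field_derivative D) (at z)"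
    and "eventually (\<lambda>t. sgn (f (z + of_real t * \<omega>)) = sgn (f z)) (nhds 0)"
  shows "\<omega> * D / f z \<in> \<real>"
proof -
  have "((\<lambda>t. f (z + of_real t * \<omega>) * cnj (f z)) has_vector_derivative \<omega> * D * cnj (f z)) (at 0)"
    using has_vector_derivative_mult_left[OF has_vector_derivative_along_line[of f D z 0 \<omega>]] assms(1)
    by simp
  moreover have "eventually (\<lambda>t. f (z + of_real t * \<omega>) * cnj (f z) \<in> \<real>) (nhds 0)"
    using assms(2) by (auto elim: eventually_mono intro: sgn_eq_imp_mult_cnj_real)
  ultimately have "\<omega> * D * cnj (f z) \<in> \<real>" by (rule has_vector_derivative_real_valued)
  then have "\<omega> * D * cnj (f z) / of_real ((cmod (f z))\<^sup>2) \<in> \<real>" by simp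
  moreover have "\<omega> * D * cnj (f z) / of_real ((cmod (f z))\<^sup>2) = \<omega> * D / f z"
    by (cases "f z = 0") (simp_all add: complex_norm_square[symmetric] field_simps)
  ultimately show ?thesis by simp
qed

(* A holomorphic function with real values on a connected open set is constant: otherwise
   its image would be open, but \<real> contains no open disc. *)
lemma real_valued_holomorphic_constant:
  assumes "h holomorphic_on S" "open S" "connected S" "\<And>z. z \<in> S \<Longrightarrow> h z \<in> \<real>"
  shows "h constant_on S"
proof (rule ccontr)
  assume nonconst: "\<not> h constant_on S"
  then obtain z where z: "z \<in> S" by (auto simp: constant_on_def)
  have "open (h ` S)" using open_mapping_thm[OF assms(1-3) assms(2) order_refl nonconst] .
  moreover have "h z \<in> h ` S" using z by (rule imageI)
  ultimately obtain e where e: "e > 0" "ball (h z) e \<subseteq> h ` S"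
    by (meson open_contains_ball)
  have "h z + \<i> * of_real (e / 2) \<in> ball (h z) e" using e(1) by (simp add: dist_norm norm_mult)
  then have "h z + \<i> * of_real (e / 2) \<in> h ` S" using e(2) by (rule subsetD[rotated])
  then obtain w where w: "w \<in> S" "h w = h z + \<i> * of_real (e / 2)" by (auto elim!: imageE)
  have "Im (h w) = 0" "Im (h z) = 0" using w(1) z assms(4) by (simp_all add: complex_is_Real_iff)
  then show False using w(2) e(1) by simp
qed

lemma exp_solution_on_ball:
  fixes f :: "complex \<Rightarrow> complex"
  assumes "\<And>w. w \<in> ball z0 r \<Longrightarrow> (f has_field_derivative a * f w) (at w)" "w \<in> ball z0 r"
  shows "f w = f z0 * exp (a * (w - z0))"
proof -
  define H where "H = (\<lambda>w. f w * exp (- (a * w)))"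
  have "(H has_field_derivative 0) (at w within ball z0 r)" if "w \<in> ball z0 r" for w
  proof -
    have "((\<lambda>w. exp (- (a * w))) has_field_derivative exp (- (a * w)) * (- a)) (at w within ball z0 r)"
      by (auto intro!: derivative_eq_intros)
    from DERIV_mult'[OF has_field_derivative_at_within[OF assms(1)[OF that]] this]
    show ?thesis unfolding H_def by (simp add: algebra_simps)
  qed
  then obtain c where "\<And>w. w \<in> ball z0 r \<Longrightarrow> H w = c"
    using has_field_derivative_zero_constant[of "ball z0 r" H] by auto
  moreover have "z0 \<in> ball z0 r" using assms(2) by (simp add: le_less_trans[OF zero_le_dist])
  ultimately have "H w = H z0" using assms(2) by metis
  then show ?thesis by (simp add: H_def exp_minus exp_diff field_simps)
qed

(* The pole set of a meromorphic function on \<complex> is closed and, being countable,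
   has a connected complement. *)
lemma meromorphic_on_C_pole_set:
  assumes "meromorphic_on_C f P"
  shows "closed P" "connected (- P)"
proof -
  have sparse: "P sparse_in UNIV"
    using assms by (simp add: meromorphic_on_C_def sparse_in_open)
  then show "closed P" by (rule sparse_in_UNIV_imp_closed)
  have "connected (UNIV - P)"
    using sparse_imp_connected[OF _ connected_UNIV open_UNIV sparse] by simp
  then show "connected (- P)" by (simp add: Compl_eq_Diff_UNIV)
qed

(* If f agrees off the poles with a function continuous everywhere, there are no poles,
   since f has a finite limit at each point. *)
lemma meromorphic_on_C_no_poles:
  assumes "meromorphic_on_C f P" "continuous_on UNIV g" "\<And>z. z \<notin> P \<Longrightarrow> f z = g z"
  shows "P = {}"
proof (rule ccontr)
  assume "P \<noteq> {}"
  then obtain p where p: "p \<in> P" by blast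
  have "eventually (\<lambda>w. w \<notin> P) (at p)"
    using assms(1) by (simp add: meromorphic_on_C_def islimpt_iff_eventually)
  then have "eventually (\<lambda>w. g w = f w) (at p)"
    by (auto elim: eventually_mono simp: assms(3))
  moreover have "(g \<longlongrightarrow> g p) (at p)"
    using assms(2) by (simp add: continuous_on_def)
  ultimately have "(f \<longlongrightarrow> g p) (at p)" by (rule Lim_transform_eventually[rotated])
  moreover have "filterlim f at_infinity (at p)"
    using assms(1) p by (simp add: meromorphic_on_C_def)
  ultimately show False
    using not_tendsto_and_filterlim_at_infinity[OF at_neq_bot] by blast
qed

lemma eventually_on_line:
  fixes z v :: complex
  assumes "open B" "z \<in> B"
  shows "eventually (\<lambda>t::real. z + of_real t * v \<in> B) (nhds 0)"
proof -
  have "isCont (\<lambda>t::real. z + of_real t * v) 0"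
    by (auto intro!: continuous_intros isCont_of_real)
  then show ?thesis using assms
    by (simp add: eventually_nhds_conv_at isCont_def tendsto_def)
qed

lemma phase_invariance_imp_logderiv_locally_constant:
  fixes f :: "complex \<Rightarrow> complex"
  assumes holo: "f holomorphic_on S" and "open S" "\<omega> \<noteq> 0" "z0 \<in> S" "f z0 \<noteq> 0"
    and phase: "\<And>(t::real) z. z \<in> S \<Longrightarrow> z + of_real t * \<omega> \<in> S \<Longrightarrow> f z \<noteq> 0 \<Longrightarrow>
           f (z + of_real t * \<omega>) \<noteq> 0 \<Longrightarrow> sgn (f (z + of_real t * \<omega>)) = sgn (f z)"
  obtains r where "r > 0" "ball z0 r \<subseteq> S"
    "\<And>w. w \<in> ball z0 r \<Longrightarrow> (f has_field_derivative (deriv f z0 / f z0) * f w) (at w)"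
proof -
  have "open (S \<inter> f -` (- {0}))"
    using continuous_open_preimage[OF holomorphic_on_imp_continuous_on[OF holo] \<open>open S\<close>] by auto
  then obtain r where r: "r > 0" "ball z0 r \<subseteq> S \<inter> f -` (- {0})"
    using assms(4,5) open_contains_ball by blast
  define B where "B = ball z0 r"
  have B: "w \<in> S" "f w \<noteq> 0" if "w \<in> B" for w using that r(2) by (auto simp: B_def)
  have der: "(f has_field_derivative deriv f w) (at w)" if "w \<in> B" for w
    using holomorphic_derivI[OF holo \<open>open S\<close> B(1)[OF that]] .
  define h where "h w = \<omega> * deriv f w / f w" for w
  have "B \<subseteq> S" using B(1) by blast
  then have "h holomorphic_on B" unfolding h_def using B(2)
    by (intro holomorphic_intros holomorphic_on_subset[OF holomorphic_deriv[OF holo \<open>open S\<close>]]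
        holomorphic_on_subset[OF holo])
  moreover have "h w \<in> \<real>" if w: "w \<in> B" for w
  proof -
    have "eventually (\<lambda>t::real. w + of_real t * \<omega> \<in> B) (nhds 0)"
      using eventually_on_line[of B w \<omega>] w by (simp add: B_def)
    then have "eventually (\<lambda>t. sgn (f (w + of_real t * \<omega>)) = sgn (f w)) (nhds 0)"
      by (auto elim!: eventually_mono intro!: phase B w)
    with der[OF w] show ?thesis unfolding h_def by (rule phase_invariance_imp_logderiv_real)
  qed
  ultimately have "h constant_on B"
    by (intro real_valued_holomorphic_constant) (auto simp: B_def)
  then obtain c where c: "\<And>w. w \<in> B \<Longrightarrow> h w = c" by (auto simp: constant_on_def)
  have "z0 \<in> B" using r(1) by (simp add: B_def)
  then have "h w = h z0" if "w \<in> B" for w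
    using c that by metis
  then have "deriv f w / f w = deriv f z0 / f z0" if "w \<in> B" for w
    using that \<open>\<omega> \<noteq> 0\<close> unfolding h_def by (metis mult_left_cancel times_divide_eq_right)
  then have "deriv f w = (deriv f z0 / f z0) * f w" if "w \<in> B" for w
    using that B(2)[OF that] by (metis nonzero_eq_divide_eq)
  then have deriv_B: "(f has_field_derivative (deriv f z0 / f z0) * f w) (at w)" if "w \<in> B" for w
    using der[OF that] that by simp
  show ?thesis
  proof (rule that)
    show "r > 0" by (rule r(1))
    show "ball z0 r \<subseteq> S" using r(2) by blast
  qed (use deriv_B in \<open>simp add: B_def\<close>)
qed

theorem mainTheorem9:
  fixes f :: "complex \<Rightarrow> complex" and P :: "complex set" and \<omega> :: complex
  assumes "meromorphic_on_C f P"
    and "\<exists>z. z \<notin> P \<and> f z \<noteq> 0"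
    and "\<omega> \<noteq> 0"
    and "\<And>(t::real) z. z \<notin> P \<Longrightarrow> z + of_real t * \<omega> \<notin> P \<Longrightarrow> f z \<noteq> 0 \<Longrightarrow>
           f (z + of_real t * \<omega>) \<noteq> 0 \<Longrightarrow>
           f (z + of_real t * \<omega>) / of_real (cmod (f (z + of_real t * \<omega>))) = f z / of_real (cmod (f z))"
  shows "\<exists>a b :: complex. \<forall>z. f z = exp (a * z + b)"
proof -
  have holo: "f holomorphic_on (- P)" using assms(1) by (simp add: meromorphic_on_C_def)
  have "closed P" "connected (- P)" using meromorphic_on_C_pole_set[OF assms(1)] by auto
  obtain z1 where z1: "z1 \<notin> P" "f z1 \<noteq> 0" using assms(2) by blast
  define a where "a = deriv f z1 / f z1"
  have phase: "sgn (f (z + of_real t * \<omega>)) = sgn (f z)"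
    if "z \<in> - P" "z + of_real t * \<omega> \<in> - P" "f z \<noteq> 0" "f (z + of_real t * \<omega>) \<noteq> 0" for t :: real and z
    using assms(4)[of z t] that by (simp add: sgn_div_norm scaleR_conv_of_real divide_inverse_commute)
  obtain r where r: "r > 0" "ball z1 r \<subseteq> - P"
    and deriv_ball: "\<And>w. w \<in> ball z1 r \<Longrightarrow> (f has_field_derivative a * f w) (at w)"
    using phase_invariance_imp_logderiv_locally_constant[OF holo _ assms(3) _ z1(2) phase]
      \<open>closed P\<close> z1(1) unfolding a_def by blast
  define g where "g w = f z1 * exp (a * (w - z1))" for w
  have "f w = g w" if "w \<in> ball z1 r" for w
    unfolding g_def using exp_solution_on_ball[OF deriv_ball that] .
  moreover have "g holomorphic_on (- P)" unfolding g_def by (intro holomorphic_intros)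
  ultimately have on_compl: "f z = g z" if "z \<notin> P" for z
    using analytic_continuation_open[of "ball z1 r" "- P" f g z] r holo \<open>closed P\<close>
      \<open>connected (- P)\<close> that by (simp add: open_Compl)
  have "continuous_on UNIV g" unfolding g_def by (intro continuous_intros)
  then have "P = {}" using meromorphic_on_C_no_poles[OF assms(1) _ on_compl] by blast
  then have "f z = exp (a * z + (Ln (f z1) - a * z1))" for z
    using on_compl[of z] z1(2) by (simp add: g_def algebra_simps exp_add exp_diff)
  then show ?thesis by blast
qed

end
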